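(* Let $\mathcal H$ and $\mathcal H'$ be the rank-one-root affine Hecke algebras described in the context. There is no algebra homomorphism $I:\mathcal H\to\mathcal H'$ such that $I(T_s)=c'\theta_{k(\alpha')^\vee}T_{s'}+b'$ for some $c'\in\mathbb C^\times$, $b'\in\mathbb C[Y']$ and half-integer $k\in\frac12+\mathbb Z$, and $I(\theta_{\alpha^\vee})=c\,\theta_{n(\alpha')^\vee}$ for some $c\in\mathbb C^\times$ and $n\in\frac12\mathbb Z_{>0}$ (here $k(\alpha')^\vee,n(\alpha')^\vee\in Y'$).
   Context: Let $\mathcal R=(X,R=\{\pm\alpha\},Y,R^\vee=\{\pm\alpha^\vee\},\Delta=\{\alpha\})$ and $\mathcal R'=(X',\{\pm\alpha'\},Y',\{\pm(\alpha')^\vee\},\{\alpha'\})$ be based root data (free $\mathbb Z$-modules of finite rank in perfect pairing, $\langle\alpha,\alpha^\vee\rangle=2$). Let $\lambda(\alpha),\lambda^*(\alpha),\lambda'(\alpha'),(\lambda^* )'(\alpha')$ be positive reals with $\lambda(\alpha)=\lambda^*(\alpha)$ unless $\alpha\in2X$ and $\lambda'(\alpha')=(\lambda^* )'(\alpha')$ unless $\alpha'\in2X'$. Fix $\mathbf q>1$; $q_1=\mathbf q^{\lambda(\alpha)}$, $q_0=\mathbf q^{\lambda^*(\alpha)}$, $q_1'=\mathbf q^{\lambda'(\alpha')}$, $q_0'=\mathbf q^{(\lambda^* )'(\alpha')}$. $s=s_\alpha$, $s'=s_{\alpha'}$. $\mathcal H=\mathbb C[Y]\otimes\mathcal H(W_0,q)$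 with $\mathbb C[Y]$ (basis $\theta_y$) and $\operatorname{span}(1,T_s)$, $(T_s+1)(T_s-q_1)=0$, as subalgebras and $\theta_yT_s-T_s\theta_{s(y)}=\big((q_1-1)+\theta_{-\alpha^\vee}(q_1^{1/2}q_0^{1/2}-q_1^{1/2}q_0^{-1/2})\big)\frac{\theta_y-\theta_{s(y)}}{\theta_0-\theta_{-2\alpha^\vee}}$; $\mathcal H'$ likewise from $\mathcal R',q_1',q_0'$ with generator $T_{s'}$. *)

theory Defs
  imports Complex_Main "HOL-Library.Poly_Mapping" "HOL-Analysis.Finite_Cartesian_Product"
begin

text \<open>Lattices X = Y = int^n (free Z-modules of finite rank), in perfect pairing via the
  standard dot product.  The group algebra C[Y] is the ring of finitely supported functions
  Y => complex with convolution product (Poly_Mapping); theta y is the basis element.\<close>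

definition pairing :: "int ^ 'n \<Rightarrow> int ^ 'n \<Rightarrow> int" where
  "pairing x y = (\<Sum>i\<in>UNIV. x $ i * y $ i)"

definition theta :: "int ^ 'n \<Rightarrow> (int ^ 'n \<Rightarrow>\<^sub>0 complex)" where
  "theta y = Poly_Mapping.single y 1"

definition cst :: "complex \<Rightarrow> (int ^ 'n \<Rightarrow>\<^sub>0 complex)" where
  "cst c = Poly_Mapping.single 0 c"

definition sref :: "int ^ 'n \<Rightarrow> int ^ 'n \<Rightarrow> int ^ 'n \<Rightarrow> int ^ 'n" where
  "sref a av y = (\<chi> i. y $ i - pairing a y * av $ i)"

definition refl_alg :: "int ^ 'n \<Rightarrow> int ^ 'n \<Rightarrow> (int ^ 'n \<Rightarrow>\<^sub>0 complex) \<Rightarrow> (int ^ 'n \<Rightarrow>\<^sub>0 complex)" where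
  "refl_alg a av f = (\<Sum>y\<in>Poly_Mapping.keys f. cst (Poly_Mapping.lookup f y) * theta (sref a av y))"

text \<open>Delta(f) = ((q1-1) + theta_{-av}(q1^(1/2) q0^(1/2) - q1^(1/2) q0^(-1/2)))
   * (f - s f) / (theta_0 - theta_{-2 av}), the quotient taken in C[Y].
   Bernstein relation: f T_s - T_s s(f) = Delta f.\<close>
definition Delta :: "int ^ 'n \<Rightarrow> int ^ 'n \<Rightarrow> real \<Rightarrow> real \<Rightarrow> (int ^ 'n \<Rightarrow>\<^sub>0 complex) \<Rightarrow> (int ^ 'n \<Rightarrow>\<^sub>0 complex)" where
  "Delta a av q1 q0 f = (THE h. h * (theta 0 - theta (- (av + av))) =
      (cst (of_real (q1 - 1)) + theta (- av) * cst (of_real (sqrt q1 * sqrt q0 - sqrt q1 / sqrt q0)))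
      * (f - refl_alg a av f))"

text \<open>Elements of H = C[Y] (x) H(W_0,q) are pairs (f, g) standing for f + g T_s.
  Using T_s c = s(c) T_s - Delta(s c) and T_s^2 = (q1-1) T_s + q1 one gets the product below.\<close>
type_synonym ('n) hecke = "(int ^ 'n \<Rightarrow>\<^sub>0 complex) \<times> (int ^ 'n \<Rightarrow>\<^sub>0 complex)"

definition hmult :: "int ^ 'n \<Rightarrow> int ^ 'n \<Rightarrow> real \<Rightarrow> real \<Rightarrow> ('n::finite) hecke \<Rightarrow> ('n::finite) hecke \<Rightarrow> 'n hecke" where
  "hmult a av q1 q0 x z = (case x of (f, g) \<Rightarrow> case z of (c, d) \<Rightarrow>
     (f * c - g * Delta a av q1 q0 (refl_alg a av c) + cst (of_real q1) * g * refl_alg a av d,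
      f * d + g * refl_alg a av c + cst (of_real (q1 - 1)) * g * refl_alg a av d
        - g * Delta a av q1 q0 (refl_alg a av d)))"

definition hadd :: "('n::finite) hecke \<Rightarrow> ('n::finite) hecke \<Rightarrow> 'n hecke" where
  "hadd x z = (fst x + fst z, snd x + snd z)"

definition hscale :: "complex \<Rightarrow> ('n::finite) hecke \<Rightarrow> 'n hecke" where
  "hscale c x = (cst c * fst x, cst c * snd x)"

definition hone :: "('n::finite) hecke" where
  "hone = (theta 0, 0)"

definition hT :: "('n::finite) hecke" where
  "hT = (0, theta 0)"

definition htheta :: "int ^ 'n \<Rightarrow> 'n hecke" where
  "htheta y = (theta y, 0)"

definition is_alg_hom ::
  "(('n::finite) hecke \<Rightarrow> ('n::finite) hecke \<Rightarrow> 'n hecke) \<Rightarrow> (('m::finite) hecke \<Rightarrow> ('m::finite) hecke \<Rightarrow> ('m::finite) hecke) \<Rightarrow> (('n::finite) hecke \<Rightarrow> ('m::finite) hecke) \<Rightarrow> bool" where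
  "is_alg_hom mul mul' I \<longleftrightarrow>
     (\<forall>x z. I (hadd x z) = hadd (I x) (I z)) \<and>
     (\<forall>c x. I (hscale c x) = hscale c (I x)) \<and>
     (\<forall>x z. I (mul x z) = mul' (I x) (I z)) \<and>
     I hone = hone"

end

theory Submission
  imports Defs
begin

(* In H the Bernstein relation reads
     theta_av T_s = T_s theta_(-av) + (q1 - 1) theta_av + (q1^(1/2) q0^(1/2) - q1^(1/2) q0^(-1/2)).
   Since <a', k av'> = 2k is odd, a' is not divisible by 2 in X', so q0' = q1' = p; then the
   Bernstein quotient of theta_(n av') in H' is the geometric sum
   (p - 1) theta_(n av') (1 + theta_(-av') + ... + theta_(-av')^(2n-1)).
   Applying I to the relation and comparing T_s'-components gives c^2 = 1.  Evaluating the
   C[Y']-components at the trivial character and at y |-> (-1)^<a',y> (both trivial on av', the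
   second equal to -1 at k av') gives two linear equations; depending on the parity of 2n, their
   sum or difference forces c' (p - 1) = 0 or q1 = 1. *)

lemma update_eq_add_single:
  "k \<notin> Poly_Mapping.keys f \<Longrightarrow> Poly_Mapping.update k v f = f + Poly_Mapping.single k v"
  by (rule poly_mapping_eqI) (auto simp: lookup_update lookup_add lookup_single when_def in_keys_iff)

definition char_eval :: "('a::monoid_add \<Rightarrow> 'b::comm_ring_1) \<Rightarrow> ('a \<Rightarrow>\<^sub>0 'b) \<Rightarrow> 'b" where
  "char_eval \<sigma> f = (\<Sum>k\<in>Poly_Mapping.keys f. Poly_Mapping.lookup f k * \<sigma> k)"

lemma char_eval_0 [simp]: "char_eval \<sigma> 0 = 0"
  by (simp add: char_eval_def)

lemma char_eval_single [simp]: "char_eval \<sigma> (Poly_Mapping.single k v) = v * \<sigma> k"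
  by (simp add: char_eval_def)

lemma char_eval_add: "char_eval \<sigma> (f + g) = char_eval \<sigma> f + char_eval \<sigma> g"
  unfolding char_eval_def by (rule setsum_keys_plus_distrib) (auto simp: algebra_simps)

lemma char_eval_diff: "char_eval \<sigma> (f - g) = char_eval \<sigma> f - char_eval \<sigma> g"
proof -
  have "char_eval \<sigma> (f - g) + char_eval \<sigma> g = char_eval \<sigma> f"
    by (simp flip: char_eval_add)
  then show ?thesis by (simp add: eq_diff_eq)
qed

lemma char_eval_sum: "char_eval \<sigma> (sum f A) = (\<Sum>x\<in>A. char_eval \<sigma> (f x))"
  by (induction A rule: infinite_finite_induct) (simp_all add: char_eval_add)

lemma char_eval_mult:
  assumes char: "\<And>x y. \<sigma> (x + y) = \<sigma> x * \<sigma> y"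
  shows "char_eval \<sigma> (f * g) = char_eval \<sigma> f * char_eval \<sigma> g"
proof -
  have single_mult: "char_eval \<sigma> (Poly_Mapping.single k v * g) = v * \<sigma> k * char_eval \<sigma> g" for k v
    by (induction g rule: update_induct)
      (simp_all add: update_eq_add_single distrib_left char_eval_add mult_single char algebra_simps)
  show ?thesis
    by (induction f rule: update_induct)
      (simp_all add: update_eq_add_single distrib_right char_eval_add single_mult algebra_simps)
qed

lemma char_eval_power:
  assumes "\<And>x y. \<sigma> (x + y) = \<sigma> x * \<sigma> y" and "\<sigma> 0 = 1"
  shows "char_eval \<sigma> (f ^ n) = char_eval \<sigma> f ^ n"
  by (induction n) (simp_all add: char_eval_mult[OF assms(1)] assms(2) flip: single_one)

lemma lookup_mult_single_one:
  fixes h :: "'a::ab_group_add \<Rightarrow>\<^sub>0 'b::semiring_1"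
  shows "Poly_Mapping.lookup (h * Poly_Mapping.single y 1) x = Poly_Mapping.lookup h (x - y)"
  by (induction h arbitrary: x rule: update_induct)
    (auto simp: update_eq_add_single distrib_right mult_single lookup_add lookup_single when_def)

(* A nonzero h with h = h * theta y would be invariant under translation by y, so its keys
   would have unbounded coordinates in a direction where y is nonzero. *)
lemma mult_one_minus_theta_eq_0_iff:
  fixes h :: "int ^ 'n \<Rightarrow>\<^sub>0 complex"
  assumes "y \<noteq> 0"
  shows "h * (1 - theta y) = 0 \<longleftrightarrow> h = 0"
proof
  assume "h * (1 - theta y) = 0"
  then have "h = h * Poly_Mapping.single y 1" by (simp add: theta_def algebra_simps)
  then have shift: "Poly_Mapping.lookup h z = Poly_Mapping.lookup h (z - y)" for z
    by (metis lookup_mult_single_one)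
  obtain i where "y $ i \<noteq> 0" using assms by (metis vec_eq_iff zero_index)
  define v where "v = (if y $ i > 0 then - y else y)"
  have vi: "v $ i < 0" using \<open>y $ i \<noteq> 0\<close> by (auto simp: v_def)
  have shift_v: "Poly_Mapping.lookup h (z + v) = Poly_Mapping.lookup h z" for z
    using shift[of z] shift[of "z + y"] by (auto simp: v_def)
  show "h = 0"
  proof (rule ccontr)
    assume "h \<noteq> 0"
    define m where "m = Min ((\<lambda>z. z $ i) ` Poly_Mapping.keys h)"
    have "m \<in> (\<lambda>z. z $ i) ` Poly_Mapping.keys h"
      unfolding m_def using \<open>h \<noteq> 0\<close> by (intro Min_in) auto
    then obtain x where x: "x \<in> Poly_Mapping.keys h" "x $ i = m" by auto
    then have "x + v \<in> Poly_Mapping.keys h" using shift_v[of x] by (simp add: in_keys_iff)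
    then have "m \<le> (x + v) $ i" unfolding m_def by (intro Min_le finite_imageI finite_keys imageI)
    then show False using x vi by simp
  qed
qed simp

lemma theta_add: "theta (y + z) = theta y * theta z"
  by (simp add: theta_def mult_single)

lemma theta_0: "theta 0 = 1"
  by (simp add: theta_def)

lemma theta_power: "theta y ^ n = theta (\<chi> i. of_nat n * y $ i)"
proof (induction n)
  case 0
  then show ?case by (simp add: theta_0 flip: zero_vec_def)
next
  case (Suc n)
  have "(\<chi> i. of_nat (Suc n) * y $ i) = y + (\<chi> i. of_nat n * y $ i)"
    by (simp add: vec_eq_iff algebra_simps)
  then show ?case using Suc by (simp add: theta_add)
qed

lemma cst_mult_theta: "cst c * theta y = Poly_Mapping.single y c"
  by (simp add: cst_def theta_def mult_single)

lemma refl_alg_single: "refl_alg a av (Poly_Mapping.single y c) = Poly_Mapping.single (sref a av y) c"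
  by (simp add: refl_alg_def cst_mult_theta)

lemma refl_alg_0: "refl_alg a av 0 = 0"
  by (simp add: refl_alg_def)

lemma pairing_add: "pairing a (y + z) = pairing a y + pairing a z"
  by (simp add: pairing_def algebra_simps sum.distrib)

lemma pairing_uminus: "pairing a (- y) = - pairing a y"
  by (simp add: pairing_def sum_negf)

lemma pairing_double_left: "pairing (x + x) y = 2 * pairing x y"
  by (simp add: pairing_def sum_distrib_left algebra_simps)

lemma pairing_half_multiple:
  assumes "pairing a av = 2" and "yv + yv = (\<chi> i. M * av $ i)"
  shows "pairing a yv = M"
proof -
  have "pairing a (\<chi> i. M * av $ i) = M * pairing a av"
    by (simp add: pairing_def sum_distrib_left algebra_simps)
  then have "pairing a (yv + yv) = M * 2" using assms by simp
  then show ?thesis by (simp only: pairing_add)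
qed

lemma sref_half_multiple:
  assumes "pairing a av = 2" and "yv + yv = (\<chi> i. M * av $ i)"
  shows "sref a av yv = - yv"
proof -
  have "yv $ i + yv $ i = M * av $ i" for i
    using assms(2) by (metis vector_add_component vec_lambda_beta)
  then show ?thesis by (simp add: sref_def pairing_half_multiple[OF assms] vec_eq_iff algebra_simps)
qed

lemma sref_uminus: "sref a av (- y) = - sref a av y"
  by (simp add: sref_def pairing_uminus vec_eq_iff)

lemma sref_coroot: "pairing a av = 2 \<Longrightarrow> sref a av av = - av"
  by (rule sref_half_multiple[where M = 2]) (simp_all add: vec_eq_iff)

lemma coroot_nonzero: "pairing a av = 2 \<Longrightarrow> av \<noteq> 0"
  by (auto simp: pairing_def)

lemma Delta_eqI:
  fixes av :: "int ^ 'n"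
  assumes "av \<noteq> 0"
    and "h * (theta 0 - theta (- (av + av))) =
      (cst (of_real (q1 - 1)) + theta (- av) * cst (of_real (sqrt q1 * sqrt q0 - sqrt q1 / sqrt q0)))
      * (f - refl_alg a av f)"
  shows "Delta a av q1 q0 f = h"
  unfolding Delta_def
proof (rule the_equality)
  fix h'
  assume "h' * (theta 0 - theta (- (av + av))) =
      (cst (of_real (q1 - 1)) + theta (- av) * cst (of_real (sqrt q1 * sqrt q0 - sqrt q1 / sqrt q0)))
      * (f - refl_alg a av f)"
  with assms(2) have "(h' - h) * (1 - theta (- (av + av))) = 0"
    by (simp add: theta_0 left_diff_distrib)
  moreover have "- (av + av) \<noteq> 0" using assms(1) by (auto simp: vec_eq_iff)
  ultimately show "h' = h" by (simp add: mult_one_minus_theta_eq_0_iff)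
qed (rule assms(2))

lemma Delta_0: "(av :: int ^ 'n) \<noteq> 0 \<Longrightarrow> Delta a av q1 q0 0 = 0"
  by (rule Delta_eqI) (simp_all add: refl_alg_0)

lemma Delta_theta_coroot:
  fixes av :: "int ^ 'n"
  assumes "pairing a av = 2"
  shows "Delta a av q1 q0 (theta av) =
    cst (of_real (q1 - 1)) * theta av + cst (of_real (sqrt q1 * sqrt q0 - sqrt q1 / sqrt q0))"
proof (rule Delta_eqI[OF coroot_nonzero[OF assms]])
  define A :: "int ^ 'n \<Rightarrow>\<^sub>0 complex" where "A = cst (of_real (q1 - 1))"
  define B :: "int ^ 'n \<Rightarrow>\<^sub>0 complex" where "B = cst (of_real (sqrt q1 * sqrt q0 - sqrt q1 / sqrt q0))"
  define u v where "u = theta av" and "v = theta (- av)"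
  have "u * v = 1" by (simp add: u_def v_def theta_0 flip: theta_add)
  moreover have "(A + v * B) * (u - v) - (A * u + B) * (1 - v * v) = (A * v + B) * (u * v - 1)"
    by (simp add: algebra_simps)
  ultimately have "(A * u + B) * (1 - v * v) = (A + v * B) * (u - v)" by simp
  moreover have "refl_alg a av (theta av) = theta (- av)"
    by (simp add: theta_def refl_alg_single sref_coroot[OF assms])
  moreover have "theta (- (av + av)) = v * v"
    by (simp only: v_def minus_add_distrib theta_add)
  ultimately show "(A * theta av + B) * (theta 0 - theta (- (av + av))) =
      (A + theta (- av) * B) * (theta av - refl_alg a av (theta av))"
    by (simp add: u_def v_def theta_0)
qed

(* For q0 = q1 the numerator factor (p - 1)(1 + theta_(-av)) cancels against the denominator
   1 - theta_(-2av), leaving a geometric sum. *)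
lemma Delta_equal_params_single_half_multiple:
  fixes av :: "int ^ 'n"
  assumes "pairing a av = 2" and yv: "yv + yv = (\<chi> i. N * av $ i)" and "N \<ge> 0" and "p > 0"
  shows "Delta a av p p (Poly_Mapping.single yv d) =
    Poly_Mapping.single yv (d * of_real (p - 1)) * (\<Sum>j<nat N. theta (- av) ^ j)"
proof (rule Delta_eqI[OF coroot_nonzero[OF assms(1)]])
  define C :: "int ^ 'n \<Rightarrow>\<^sub>0 complex" where "C = cst (of_real (p - 1))"
  define Y where "Y = Poly_Mapping.single yv d"
  define u where "u = theta (- av)"
  define S where "S = (\<Sum>j<nat N. u ^ j)"
  have shift: "yv + (\<chi> i. of_nat (nat N) * (- av) $ i) = - yv"
    using yv \<open>N \<ge> 0\<close> by (simp add: vec_eq_iff algebra_simps)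
  have "refl_alg a av Y = Poly_Mapping.single (- yv) d"
    by (simp add: Y_def refl_alg_single sref_half_multiple[OF assms(1) yv])
  also have "\<dots> = Y * u ^ nat N"
    unfolding Y_def u_def theta_power unfolding theta_def mult_single shift by simp
  finally have reflY: "refl_alg a av Y = Y * u ^ nat N" .
  have "(C + u * C) * (Y - Y * u ^ nat N) = C * Y * (1 + u) * (1 - u ^ nat N)"
    by (simp add: algebra_simps)
  also have "\<dots> = C * Y * (1 + u) * ((1 - u) * S)"
    by (simp add: S_def one_diff_power_eq)
  finally have "(C * Y * S) * (1 - u * u) = (C + u * C) * (Y - refl_alg a av Y)"
    by (simp add: reflY algebra_simps)
  moreover have "theta (- (av + av)) = u * u"
    by (simp only: u_def minus_add_distrib theta_add)
  moreover have "sqrt p * sqrt p - sqrt p / sqrt p = p - 1" using \<open>p > 0\<close> by simp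
  moreover have "Poly_Mapping.single yv (d * of_real (p - 1)) = C * Y"
    by (simp add: C_def Y_def cst_def mult_single mult.commute)
  ultimately show "Poly_Mapping.single yv (d * of_real (p - 1)) * (\<Sum>j<nat N. theta (- av) ^ j) *
      (theta 0 - theta (- (av + av))) =
    (cst (of_real (p - 1)) + theta (- av) * cst (of_real (sqrt p * sqrt p - sqrt p / sqrt p))) *
    (Poly_Mapping.single yv d - refl_alg a av (Poly_Mapping.single yv d))"
    by (simp add: C_def Y_def u_def S_def theta_0)
qed

lemma bernstein_theta_coroot:
  assumes "pairing a av = 2"
  shows "hmult a av q1 q0 (htheta av) hT =
    hadd (hmult a av q1 q0 hT (htheta (- av)))
      (hadd (hscale (of_real (q1 - 1)) (htheta av))
        (hscale (of_real (sqrt q1 * sqrt q0 - sqrt q1 / sqrt q0)) hone))"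
proof -
  have "refl_alg a av (theta (- av)) = theta av"
    by (simp add: theta_def refl_alg_single sref_uminus sref_coroot[OF assms])
  moreover have "refl_alg a av 1 = 1"
    by (simp add: refl_alg_single sref_def pairing_def flip: single_one zero_vec_def)
  ultimately show ?thesis
    by (simp add: hmult_def htheta_def hT_def hadd_def hscale_def hone_def theta_0 refl_alg_0
        Delta_0[OF coroot_nonzero[OF assms]] Delta_theta_coroot[OF assms])
qed

lemma hmult_left_C: "hmult a av q1 q0 (f, 0) (g, h) = (f * g, f * h)"
  by (simp add: hmult_def)

lemma alg_hom_theta_uminus:
  assumes hom: "is_alg_hom (hmult a av q1 q0) (hmult a' av' q1' q0') I"
    and "I (htheta av) = (Poly_Mapping.single yn c, 0)" and "c \<noteq> 0"
  shows "I (htheta (- av)) = (Poly_Mapping.single (- yn) (1 / c), 0)"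
proof -
  obtain g h where Ig: "I (htheta (- av)) = (g, h)" by fastforce
  have "hmult a av q1 q0 (htheta av) (htheta (- av)) = hone"
    by (simp add: hmult_def htheta_def hone_def theta_0 flip: theta_add)
  then have "hmult a' av' q1' q0' (Poly_Mapping.single yn c, 0) (g, h) = hone"
    using hom assms(2) Ig unfolding is_alg_hom_def by metis
  then have g: "Poly_Mapping.single yn c * g = 1" and h: "Poly_Mapping.single yn c * h = 0"
    by (simp_all add: hmult_left_C hone_def theta_0)
  have inv: "Poly_Mapping.single (- yn) (1 / c) * Poly_Mapping.single yn c = 1"
    using \<open>c \<noteq> 0\<close> by (simp add: mult_single)
  have "g = Poly_Mapping.single (- yn) (1 / c) * (Poly_Mapping.single yn c * g)"
    by (simp only: inv mult_1_left flip: mult.assoc)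
  moreover have "h = Poly_Mapping.single (- yn) (1 / c) * (Poly_Mapping.single yn c * h)"
    by (simp only: inv mult_1_left flip: mult.assoc)
  ultimately show ?thesis using Ig g h by simp
qed

lemma alg_hom_bernstein_components:
  assumes pa: "pairing a av = 2" and pa': "pairing a' av' = 2"
    and hom: "is_alg_hom (hmult a av q1 q0) (hmult a' av' q1' q0') I"
    and IX: "I (htheta av) = (Poly_Mapping.single yn c, 0)" and "c \<noteq> 0"
    and IT: "I hT = (b', e)"
    and yn: "yn + yn = (\<chi> i. N * av' $ i)"
  shows "Poly_Mapping.single yn c * e = e * Poly_Mapping.single yn (1 / c)"
    and "Poly_Mapping.single yn c * b' =
      b' * Poly_Mapping.single (- yn) (1 / c) - e * Delta a' av' q1' q0' (Poly_Mapping.single yn (1 / c))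
      + cst (of_real (q1 - 1)) * Poly_Mapping.single yn c
      + cst (of_real (sqrt q1 * sqrt q0 - sqrt q1 / sqrt q0))"
proof -
  let ?mul' = "hmult a' av' q1' q0'"
  have "?mul' (I (htheta av)) (I hT) =
    hadd (?mul' (I hT) (I (htheta (- av))))
      (hadd (hscale (of_real (q1 - 1)) (I (htheta av)))
        (hscale (of_real (sqrt q1 * sqrt q0 - sqrt q1 / sqrt q0)) hone))"
    using arg_cong[OF bernstein_theta_coroot[OF pa], of I] hom unfolding is_alg_hom_def by metis
  moreover have "refl_alg a' av' (Poly_Mapping.single (- yn) (1 / c)) = Poly_Mapping.single yn (1 / c)"
    by (simp add: refl_alg_single sref_uminus sref_half_multiple[OF pa' yn])
  ultimately show "Poly_Mapping.single yn c * e = e * Poly_Mapping.single yn (1 / c)"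
    and "Poly_Mapping.single yn c * b' =
      b' * Poly_Mapping.single (- yn) (1 / c) - e * Delta a' av' q1' q0' (Poly_Mapping.single yn (1 / c))
      + cst (of_real (q1 - 1)) * Poly_Mapping.single yn c
      + cst (of_real (sqrt q1 * sqrt q0 - sqrt q1 / sqrt q0))"
    by (simp_all add: IX IT alg_hom_theta_uminus[OF hom IX \<open>c \<noteq> 0\<close>] hmult_def hadd_def hscale_def
        hone_def theta_0 refl_alg_0 Delta_0[OF coroot_nonzero[OF pa']])
qed

definition parity_char :: "int ^ 'n \<Rightarrow> int ^ 'n \<Rightarrow> complex" where
  "parity_char a y = (if even (pairing a y) then 1 else - 1)"

lemma parity_char_add: "parity_char a (x + y) = parity_char a x * parity_char a y"
  unfolding parity_char_def pairing_add
  by (cases "even (pairing a x)"; cases "even (pairing a y)") simp_all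

lemma parity_char_0: "parity_char a 0 = 1"
  by (simp add: parity_char_def pairing_def)

lemma parity_char_uminus: "parity_char a (- y) = parity_char a y"
  by (simp add: parity_char_def pairing_uminus)

lemma parity_char_half_multiple:
  assumes "pairing a av = 2" and "yv + yv = (\<chi> i. M * av $ i)"
  shows "parity_char a yv = (if even M then 1 else - 1)"
  by (simp only: parity_char_def pairing_half_multiple[OF assms])

lemma no_alg_hom_to_equal_params:
  fixes I :: "('n::finite) hecke \<Rightarrow> ('m::finite) hecke"
  assumes pa: "pairing a av = 2" and pa': "pairing a' av' = 2" and "q1 > 1" and "p > 1"
    and hom: "is_alg_hom (hmult a av q1 q0) (hmult a' av' p p') I" and "p' = p"
    and "c' \<noteq> 0" and "odd K" and yk: "yk + yk = (\<chi> i. K * av' $ i)"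
    and IT: "I hT = hadd (hmult a' av' p p' (hscale c' (htheta yk)) hT) (b', 0)"
    and "c \<noteq> 0" and "N > 0" and yn: "yn + yn = (\<chi> i. N * av' $ i)"
    and IX: "I (htheta av) = hscale c (htheta yn)"
  shows False
proof -
  define xx where "xx = complex_of_real (sqrt q1 * sqrt q0 - sqrt q1 / sqrt q0)"
  define X where "X = c' * c * of_real (p - 1) * of_int N"
  define R where "R = of_real (q1 - 1) * c"
  from hom \<open>p' = p\<close> have hom: "is_alg_hom (hmult a av q1 q0) (hmult a' av' p p) I" by simp
  have IT': "I hT = (b', Poly_Mapping.single yk c')"
    using IT \<open>p' = p\<close> by (simp add: hmult_def hadd_def hscale_def htheta_def hT_def cst_mult_theta theta_0)
  have IX': "I (htheta av) = (Poly_Mapping.single yn c, 0)"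
    using IX by (simp add: hscale_def htheta_def cst_mult_theta)
  note components = alg_hom_bernstein_components[OF pa pa' hom IX' \<open>c \<noteq> 0\<close> IT' yn]
  have "c * c' = c' * (1 / c)"
    using arg_cong[OF components(1), of "char_eval (\<lambda>_. 1)"] by (simp add: char_eval_mult)
  then have "1 / c = c" using \<open>c \<noteq> 0\<close> \<open>c' \<noteq> 0\<close> by (simp add: field_simps)
  have constraint: "\<sigma> yn * (R - \<sigma> yk * X) + xx = 0"
    if char: "\<And>x y. \<sigma> (x + y) = \<sigma> x * \<sigma> y" and "\<sigma> 0 = 1" and "\<sigma> (- av') = 1"
      and "\<sigma> (- yn) = \<sigma> yn" for \<sigma>
  proof -
    define \<beta> where "\<beta> = char_eval \<sigma> b'"
    have "char_eval \<sigma> (Delta a' av' p p (Poly_Mapping.single yn (1 / c))) =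
        1 / c * of_real (p - 1) * \<sigma> yn * of_int N"
      using \<open>N > 0\<close> \<open>p > 1\<close> that
      by (simp add: Delta_equal_params_single_half_multiple[OF pa' yn] char_eval_mult[OF char]
          char_eval_sum char_eval_power theta_def)
    then have "c * \<sigma> yn * \<beta> =
        \<beta> * \<sigma> yn * (1 / c) - c' * \<sigma> yk * (1 / c * of_real (p - 1) * \<sigma> yn * of_int N)
        + of_real (q1 - 1) * c * \<sigma> yn + xx"
      using arg_cong[OF components(2), of "char_eval \<sigma>"] that
      by (simp add: char_eval_add char_eval_diff char_eval_mult[OF char] cst_def xx_def \<beta>_def)
    then show ?thesis
      using \<open>1 / c = c\<close> by (simp add: X_def R_def algebra_simps)
  qed
  have trivial: "R - X + xx = 0"
    using constraint[of "\<lambda>_. 1"] by simp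
  have parity: "parity_char a' yn * (R + X) + xx = 0"
    using constraint[of "parity_char a'"] \<open>odd K\<close>
    by (simp add: parity_char_add parity_char_0 parity_char_uminus parity_char_def[of a' av'] pa'
        parity_char_half_multiple[OF pa' yk])
  show False
  proof (cases "even N")
    case True
    then have "2 * X = (parity_char a' yn * (R + X) + xx) - (R - X + xx)"
      by (simp add: parity_char_half_multiple[OF pa' yn] algebra_simps)
    also have "\<dots> = 0" by (simp only: trivial parity diff_zero)
    finally show False using \<open>c \<noteq> 0\<close> \<open>c' \<noteq> 0\<close> \<open>N > 0\<close> \<open>p > 1\<close> by (simp add: X_def)
  next
    case False
    then have "2 * R = (R - X + xx) - (parity_char a' yn * (R + X) + xx)"
      by (simp add: parity_char_half_multiple[OF pa' yn] algebra_simps)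
    also have "\<dots> = 0" by (simp only: trivial parity diff_zero)
    finally show False using \<open>c \<noteq> 0\<close> \<open>q1 > 1\<close> by (simp add: R_def)
  qed
qed

theorem lemmaD4:
  fixes a av :: "int ^ 'n" and a' av' :: "int ^ 'm"
    and qq lam lamS lam' lamS' :: real
  assumes "pairing a av = 2" and "pairing a' av' = 2"
    and "lam > 0" and "lamS > 0" and "lam' > 0" and "lamS' > 0"
    and "\<not> (\<exists>x. a = x + x) \<Longrightarrow> lam = lamS"
    and "\<not> (\<exists>x. a' = x + x) \<Longrightarrow> lam' = lamS'"
    and "qq > 1"
  shows "\<not> (\<exists>I :: 'n hecke \<Rightarrow> 'm hecke.
     is_alg_hom (hmult a av (qq powr lam) (qq powr lamS))
                (hmult a' av' (qq powr lam') (qq powr lamS')) I \<and>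
     (\<exists>c' b' (K :: int) yk. c' \<noteq> 0 \<and> odd K \<and> yk + yk = (\<chi> i. K * av' $ i) \<and>
        I hT = hadd (hmult a' av' (qq powr lam') (qq powr lamS') (hscale c' (htheta yk)) hT) (b', 0)) \<and>
     (\<exists>c (N :: int) yn. c \<noteq> 0 \<and> N > 0 \<and> yn + yn = (\<chi> i. N * av' $ i) \<and>
        I (htheta av) = hscale c (htheta yn)))"
proof -
  have "qq powr lamS' = qq powr lam'" if "odd K" and yk: "yk + yk = (\<chi> i. K * av' $ i)" for K yk
  proof -
    have "\<not> (\<exists>x. a' = x + x)"
    proof
      assume "\<exists>x. a' = x + x"
      then obtain x where "a' = x + x" by blast
      then have "K = 2 * pairing x yk"
        using pairing_half_multiple[OF assms(2) yk] pairing_double_left[of x yk] by simp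
      with \<open>odd K\<close> show False by simp
    qed
    with assms(8) show ?thesis by simp
  qed
  then show ?thesis
    using no_alg_hom_to_equal_params[OF assms(1,2) gr_one_powr[OF assms(9,3)] gr_one_powr[OF assms(9,5)]]
    by blast
qed

end
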